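(* Let $\eta\ge2$ and $P\in\mathfrak N_\eta$ with $h_P>\eta$. Then $P$ does not have a 4-crown as a retract.
   Context: All posets are finite; $h_P$ is the height; level sets $P(0)=\min P$, $P(k+1)=\min(P\setminus\bigcup_{i\le k}P(i))$; $A<B$ means $a<b$ for all $a\in A,b\in B$. A 4-crown is the ordinal sum of two 2-element antichains. A retract is the image of an idempotent order-preserving self-map. A section of width three is a poset $P$ of height $h_P\ge1$ with carrier $\{c_{k,j}:k\in[0,h_P],j\in\{0,1,2\}\}$ such that: $c_{0,j}<\dots<c_{h_P,j}$ for each $j$; each $\{c_{k,0},c_{k,1},c_{k,2}\}$ is an antichain; $c_{k,i}<c_{\ell,j}\Rightarrow c_{k,i+1}<c_{\ell,j+1}$ (indices mod 3); and for no $k$ is $P(k)<P(k+1)$. It is nice if for all $x<y$: $\{z:z>x\}\not\subseteq\{z:z\ge y\}$ and $\{z:z<y\}\not\subseteq\{z:z\le x\}$. The horizon of a nice section of height $\ge2$ is the smallest $\eta\in\mathbb N$ with $P(k)<P(k+\eta)$ for all $k\in[0,h_P-\eta]$; $\mathfrak N_\eta$ is the class of nice sections of height $\ge2$ with horizon $\eta$. *)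

theory Defs
  imports Main
begin

definition finite_poset :: "'a set \<Rightarrow> ('a \<Rightarrow> 'a \<Rightarrow> bool) \<Rightarrow> bool" where
  "finite_poset A le \<longleftrightarrow> finite A \<and>
     (\<forall>x\<in>A. le x x) \<and>
     (\<forall>x\<in>A. \<forall>y\<in>A. le x y \<and> le y x \<longrightarrow> x = y) \<and>
     (\<forall>x\<in>A. \<forall>y\<in>A. \<forall>z\<in>A. le x y \<and> le y z \<longrightarrow> le x z)"

definition lt :: "('a \<Rightarrow> 'a \<Rightarrow> bool) \<Rightarrow> 'a \<Rightarrow> 'a \<Rightarrow> bool" where
  "lt le x y \<longleftrightarrow> le x y \<and> x \<noteq> y"

definition set_less :: "('a \<Rightarrow> 'a \<Rightarrow> bool) \<Rightarrow> 'a set \<Rightarrow> 'a set \<Rightarrow> bool" where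
  "set_less le X Y \<longleftrightarrow> (\<forall>a\<in>X. \<forall>b\<in>Y. lt le a b)"

definition is_chain :: "('a \<Rightarrow> 'a \<Rightarrow> bool) \<Rightarrow> 'a set \<Rightarrow> bool" where
  "is_chain le C \<longleftrightarrow> (\<forall>x\<in>C. \<forall>y\<in>C. le x y \<or> le y x)"

definition height :: "'a set \<Rightarrow> ('a \<Rightarrow> 'a \<Rightarrow> bool) \<Rightarrow> nat" where
  "height A le = Max {card C - 1 | C. C \<subseteq> A \<and> C \<noteq> {} \<and> is_chain le C}"

definition minset :: "('a \<Rightarrow> 'a \<Rightarrow> bool) \<Rightarrow> 'a set \<Rightarrow> 'a set" where
  "minset le S = {x \<in> S. \<not> (\<exists>y\<in>S. lt le y x)}"

text \<open>remaining k = A minus the union of levels 0..k-1; level k = min of remaining k.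
  This is P(0) = min P, P(k+1) = min (P minus union of P(i), i \<le> k).\<close>
fun remaining :: "'a set \<Rightarrow> ('a \<Rightarrow> 'a \<Rightarrow> bool) \<Rightarrow> nat \<Rightarrow> 'a set" where
  "remaining A le 0 = A"
| "remaining A le (Suc k) = remaining A le k - minset le (remaining A le k)"

definition level :: "'a set \<Rightarrow> ('a \<Rightarrow> 'a \<Rightarrow> bool) \<Rightarrow> nat \<Rightarrow> 'a set" where
  "level A le k = minset le (remaining A le k)"

definition section3 :: "'a set \<Rightarrow> ('a \<Rightarrow> 'a \<Rightarrow> bool) \<Rightarrow> bool" where
  "section3 A le \<longleftrightarrow> height A le \<ge> 1 \<and>
    (\<exists>c :: nat \<Rightarrow> nat \<Rightarrow> 'a.
      let h = height A le in
      inj_on (\<lambda>(k, j). c k j) ({0..h} \<times> {0..<3}) \<and>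
      A = {c k j | k j. k \<le> h \<and> j < 3} \<and>
      (\<forall>j<3. \<forall>k<h. lt le (c k j) (c (Suc k) j)) \<and>
      (\<forall>k\<le>h. \<forall>i<3. \<forall>j<3. i \<noteq> j \<longrightarrow> \<not> le (c k i) (c k j)) \<and>
      (\<forall>k\<le>h. \<forall>l\<le>h. \<forall>i<3. \<forall>j<3.
          lt le (c k i) (c l j) \<longrightarrow> lt le (c k ((i + 1) mod 3)) (c l ((j + 1) mod 3))) \<and>
      (\<forall>k. k + 1 \<le> h \<longrightarrow> \<not> set_less le (level A le k) (level A le (k + 1))))"

definition nice :: "'a set \<Rightarrow> ('a \<Rightarrow> 'a \<Rightarrow> bool) \<Rightarrow> bool" where
  "nice A le \<longleftrightarrow> (\<forall>x\<in>A. \<forall>y\<in>A. lt le x y \<longrightarrow>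
      \<not> ({z\<in>A. lt le x z} \<subseteq> {z\<in>A. le y z}) \<and>
      \<not> ({z\<in>A. lt le z y} \<subseteq> {z\<in>A. le z x}))"

definition horizon :: "'a set \<Rightarrow> ('a \<Rightarrow> 'a \<Rightarrow> bool) \<Rightarrow> nat" where
  "horizon A le = (LEAST \<eta>. \<forall>k. k + \<eta> \<le> height A le \<longrightarrow>
      set_less le (level A le k) (level A le (k + \<eta>)))"

definition in_N :: "nat \<Rightarrow> 'a set \<Rightarrow> ('a \<Rightarrow> 'a \<Rightarrow> bool) \<Rightarrow> bool" where
  "in_N \<eta> A le \<longleftrightarrow> finite_poset A le \<and> section3 A le \<and> nice A le \<and>
     height A le \<ge> 2 \<and> horizon A le = \<eta>"

definition has_4crown_retract :: "'a set \<Rightarrow> ('a \<Rightarrow> 'a \<Rightarrow> bool) \<Rightarrow> bool" where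
  "has_4crown_retract A le \<longleftrightarrow> (\<exists>r. (\<forall>x\<in>A. r x \<in> A) \<and>
     (\<forall>x\<in>A. \<forall>y\<in>A. le x y \<longrightarrow> le (r x) (r y)) \<and>
     (\<forall>x\<in>A. r (r x) = r x) \<and>
     (\<exists>a b c d. r ` A = {a, b, c, d} \<and> a \<noteq> b \<and> c \<noteq> d \<and>
        \<not> le a b \<and> \<not> le b a \<and> \<not> le c d \<and> \<not> le d c \<and>
        lt le a c \<and> lt le a d \<and> lt le b c \<and> lt le b d))"

end

theory Submission
  imports Defs
begin

text \<open>Let \<open>r\<close> be a retraction of \<open>P\<close> onto a 4-crown with minimal elements \<open>a, b\<close> and maximal
  elements \<open>c, d\<close>. The bottom of the column through \<open>a\<close> is sent to \<open>a\<close>, likewise for \<open>b\<close>, and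
  the top of the column through \<open>c\<close> (resp. \<open>d\<close>) is sent to \<open>c\<close> (resp. \<open>d\<close>). Since \<open>h\<^sub>P > \<eta>\<close>, the
  horizon puts the whole bottom level below the penultimate level, so \<open>r\<close> maps the penultimate
  level into \<open>{c, d}\<close>, and every element of the top level lying above an element \<open>x\<close> of the
  penultimate level is mapped to \<open>r x\<close>. Niceness and the cyclic symmetry of the section force
  every top element to be linked in this way to the top element of a different column,
  with a rotation of the three columns; hence \<open>r\<close> is constant on the top level, so \<open>c = d\<close>.\<close>

lemma finite_poset_refl: "finite_poset A le \<Longrightarrow> x \<in> A \<Longrightarrow> le x x"
  unfolding finite_poset_def by blast

lemma finite_poset_antisym:
  "finite_poset A le \<Longrightarrow> x \<in> A \<Longrightarrow> y \<in> A \<Longrightarrow> le x y \<Longrightarrow> le y x \<Longrightarrow> x = y"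
  unfolding finite_poset_def by blast

lemma finite_poset_trans:
  "finite_poset A le \<Longrightarrow> x \<in> A \<Longrightarrow> y \<in> A \<Longrightarrow> z \<in> A \<Longrightarrow> le x y \<Longrightarrow> le y z \<Longrightarrow> le x z"
  unfolding finite_poset_def by blast

lemma finite_poset_less_not_le:
  "finite_poset A le \<Longrightarrow> x \<in> A \<Longrightarrow> y \<in> A \<Longrightarrow> lt le x y \<Longrightarrow> \<not> le y x"
  unfolding finite_poset_def lt_def by blast

lemma horizon_set_less:
  assumes "k + horizon A le \<le> height A le"
  shows "set_less le (level A le k) (level A le (k + horizon A le))"
proof -
  let ?good = "\<lambda>\<eta>. \<forall>k. k + \<eta> \<le> height A le \<longrightarrow> set_less le (level A le k) (level A le (k + \<eta>))"
  have "?good (Suc (height A le))" by simp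
  then have "?good (horizon A le)"
    unfolding horizon_def by (rule LeastI)
  with assms show ?thesis by blast
qed

lemma rotation_mod3_const:
  assumes "j \<in> {1, 2}" and "\<And>i. i < 3 \<Longrightarrow> f i = f ((i + j) mod 3)"
    and "p < (3::nat)" and "q < 3"
  shows "f p = f q"
proof -
  have "f 0 = f 1 \<and> f 1 = f 2"
    using assms(1) assms(2)[of 0] assms(2)[of 1] assms(2)[of 2] by auto
  moreover have "p \<in> {0, 1, 2}" "q \<in> {0, 1, 2}" using assms(3,4) by auto
  ultimately show ?thesis by auto
qed

locale column_grid =
  fixes A :: "'a set" and le :: "'a \<Rightarrow> 'a \<Rightarrow> bool" and h w :: nat
    and c :: "nat \<Rightarrow> nat \<Rightarrow> 'a"
  assumes poset: "finite_poset A le"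
    and carrier: "A = {c k j | k j. k \<le> h \<and> j < w}"
    and column_step: "\<And>k j. k < h \<Longrightarrow> j < w \<Longrightarrow> lt le (c k j) (c (Suc k) j)"
    and row_antichain: "\<And>k i j. k \<le> h \<Longrightarrow> i < w \<Longrightarrow> j < w \<Longrightarrow> i \<noteq> j \<Longrightarrow> \<not> le (c k i) (c k j)"
begin

lemma cell_in_carrier: "k \<le> h \<Longrightarrow> j < w \<Longrightarrow> c k j \<in> A"
  using carrier by blast

lemma carrier_cell: "x \<in> A \<Longrightarrow> \<exists>k j. x = c k j \<and> k \<le> h \<and> j < w"
  using carrier by blast

lemma le_trans_carrier: "le x y \<Longrightarrow> le y z \<Longrightarrow> x \<in> A \<Longrightarrow> y \<in> A \<Longrightarrow> z \<in> A \<Longrightarrow> le x z"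
  using finite_poset_trans[OF poset] by blast

lemma column_le: "k \<le> l \<Longrightarrow> l \<le> h \<Longrightarrow> j < w \<Longrightarrow> le (c k j) (c l j)"
proof (induction l rule: dec_induct)
  case base
  then show ?case using finite_poset_refl[OF poset] cell_in_carrier by simp
next
  case (step l)
  then have "le (c l j) (c (Suc l) j)" using column_step unfolding lt_def by simp
  with step show ?case using le_trans_carrier cell_in_carrier by simp
qed

lemma not_less_lower_row: "k \<le> l \<Longrightarrow> l \<le> h \<Longrightarrow> i < w \<Longrightarrow> j < w \<Longrightarrow> \<not> lt le (c l i) (c k j)"
proof
  assume kl: "k \<le> l" "l \<le> h" "i < w" "j < w" and less: "lt le (c l i) (c k j)"
  have below: "le (c k i) (c l i)" using column_le kl by simp
  have "le (c k i) (c k j)"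
    using le_trans_carrier[OF below] less kl cell_in_carrier unfolding lt_def by simp
  then have "i = j" using row_antichain[of k i j] kl by auto
  with below less kl show False
    using finite_poset_antisym[OF poset, of "c k i" "c l i"] cell_in_carrier unfolding lt_def by simp
qed

lemma column_less: "k < l \<Longrightarrow> l \<le> h \<Longrightarrow> j < w \<Longrightarrow> lt le (c k j) (c l j)"
  using column_le[of k l j] column_step[of k j] not_less_lower_row[of "Suc k" l j j]
  unfolding lt_def by auto

definition rows_from :: "nat \<Rightarrow> 'a set" where
  "rows_from k = {c l j | l j. k \<le> l \<and> l \<le> h \<and> j < w}"

lemma minset_rows_from:
  assumes "k \<le> h"
  shows "minset le (rows_from k) = {c k j | j. j < w}"
proof (intro equalityI subsetI)
  fix x assume "x \<in> minset le (rows_from k)"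
  then obtain l j where x: "x = c l j" "k \<le> l" "l \<le> h" "j < w"
    and minimal: "\<not> (\<exists>y \<in> rows_from k. lt le y x)"
    unfolding minset_def rows_from_def by blast
  have "l = k"
  proof (rule ccontr)
    assume "l \<noteq> k"
    then have "lt le (c k j) x" using column_less x by simp
    moreover have "c k j \<in> rows_from k" using x assms unfolding rows_from_def by blast
    ultimately show False using minimal by blast
  qed
  then show "x \<in> {c k j | j. j < w}" using x by blast
next
  fix x assume "x \<in> {c k j | j. j < w}"
  then obtain j where x: "x = c k j" "j < w" by blast
  have "\<not> lt le y x" if "y \<in> rows_from k" for y
    using that not_less_lower_row x unfolding rows_from_def by blast
  then show "x \<in> minset le (rows_from k)"
    using x assms unfolding minset_def rows_from_def by blast
qed

lemma rows_from_Suc: "rows_from (Suc k) = rows_from k - {c k j | j. j < w}"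
proof (intro equalityI subsetI)
  fix x assume "x \<in> rows_from (Suc k)"
  then obtain l j where x: "x = c l j" "k < l" "l \<le> h" "j < w"
    unfolding rows_from_def by auto
  have "x \<noteq> c k i" if "i < w" for i
    using column_less[of k l j] not_less_lower_row[of k k j i] x that by auto
  moreover have "x \<in> rows_from k" using x unfolding rows_from_def by fastforce
  ultimately show "x \<in> rows_from k - {c k j | j. j < w}"
    using x by blast
next
  fix x assume x: "x \<in> rows_from k - {c k j | j. j < w}"
  then obtain l j where lj: "x = c l j" "k \<le> l" "l \<le> h" "j < w"
    unfolding rows_from_def by blast
  with x have "Suc k \<le> l" by (cases "l = k") auto
  with lj show "x \<in> rows_from (Suc k)" unfolding rows_from_def by blast
qed

lemma remaining_eq: "k \<le> h \<Longrightarrow> remaining A le k = rows_from k"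
proof (induction k)
  case 0
  then show ?case using carrier unfolding rows_from_def by simp
next
  case (Suc k)
  then show ?case using minset_rows_from rows_from_Suc by simp
qed

lemma level_eq: "k \<le> h \<Longrightarrow> level A le k = {c k j | j. j < w}"
  unfolding level_def using remaining_eq minset_rows_from by simp

end

locale section3_grid = column_grid A le h 3 c
  for A :: "'a set" and le h and c :: "nat \<Rightarrow> nat \<Rightarrow> 'a" +
  assumes shift: "\<And>k l i j. k \<le> h \<Longrightarrow> l \<le> h \<Longrightarrow> i < 3 \<Longrightarrow> j < 3 \<Longrightarrow> lt le (c k i) (c l j) \<Longrightarrow>
      lt le (c k ((i + 1) mod 3)) (c l ((j + 1) mod 3))"
begin

lemma shift_iter:
  assumes "k \<le> h" "l \<le> h" "j < 3" and "lt le (c k 0) (c l j)" and "i < 3"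
  shows "lt le (c k i) (c l ((i + j) mod 3))"
  using assms(5)
proof (induction i)
  case (Suc i)
  have "lt le (c k ((i + 1) mod 3)) (c l (((i + j) mod 3 + 1) mod 3))"
    by (rule shift[OF assms(1,2)]) (use Suc in simp_all)
  moreover have "(i + 1) mod 3 = Suc i" "((i + j) mod 3 + 1) mod 3 = (Suc i + j) mod 3"
    using Suc.prems by (simp_all add: mod_Suc_eq)
  ultimately show ?case by simp
qed (use assms in simp)

text \<open>The first clause of niceness at \<open>c k 0 < c h 0\<close> yields an element of the top level,
  necessarily in another column, above \<open>c k 0\<close>; the shift condition propagates this cover
  around all three columns.\<close>

lemma nice_top_row_rotation:
  assumes "nice A le" and "h = Suc k"
  obtains j where "j \<in> {1, 2}" and "\<And>i. i < 3 \<Longrightarrow> lt le (c k i) (c h ((i + j) mod 3))"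
proof -
  have "lt le (c k 0) (c h 0)" using column_less assms(2) by simp
  then have "\<not> {z \<in> A. lt le (c k 0) z} \<subseteq> {z \<in> A. le (c h 0) z}"
    using assms cell_in_carrier[of k 0] cell_in_carrier[of h 0] unfolding nice_def by simp
  then obtain z where z: "z \<in> A" "lt le (c k 0) z" "\<not> le (c h 0) z"
    by blast
  then obtain l j where lj: "z = c l j" "l \<le> h" "j < 3" using carrier_cell by blast
  have "l = h" using not_less_lower_row[of l k 0 j] z lj assms(2) by fastforce
  have "j \<noteq> 0"
  proof
    assume "j = 0"
    with z lj \<open>l = h\<close> show False using finite_poset_refl[OF poset] by simp
  qed
  with lj have "j \<in> {1, 2}" by auto
  moreover have "lt le (c k i) (c h ((i + j) mod 3))" if "i < 3" for i
    using shift_iter[of k h j i] z lj \<open>l = h\<close> assms(2) that by simp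
  ultimately show ?thesis using that by blast
qed

end

lemma section3_grid_exists:
  assumes "finite_poset A le" and "section3 A le"
  obtains c where "section3_grid A le (height A le) c"
proof -
  let ?h = "height A le"
  from assms(2) obtain c :: "nat \<Rightarrow> nat \<Rightarrow> 'a" where
    carrier: "A = {c k j | k j. k \<le> ?h \<and> j < 3}" and
    steps: "\<forall>j<3. \<forall>k<?h. lt le (c k j) (c (Suc k) j)" and
    antichains: "\<forall>k\<le>?h. \<forall>i<3. \<forall>j<3. i \<noteq> j \<longrightarrow> \<not> le (c k i) (c k j)" and
    shift: "\<forall>k\<le>?h. \<forall>l\<le>?h. \<forall>i<3. \<forall>j<3.
      lt le (c k i) (c l j) \<longrightarrow> lt le (c k ((i + 1) mod 3)) (c l ((j + 1) mod 3))"
    unfolding section3_def Let_def by blast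
  have "section3_grid A le ?h c"
    by unfold_locales (use assms(1) carrier steps antichains shift in simp_all)
  then show thesis by (rule that)
qed

locale crown_retract =
  fixes A :: "'a set" and le :: "'a \<Rightarrow> 'a \<Rightarrow> bool" and r :: "'a \<Rightarrow> 'a" and a b c d :: 'a
  assumes poset: "finite_poset A le"
    and maps_to: "\<And>x. x \<in> A \<Longrightarrow> r x \<in> A"
    and mono: "\<And>x y. x \<in> A \<Longrightarrow> y \<in> A \<Longrightarrow> le x y \<Longrightarrow> le (r x) (r y)"
    and idem: "\<And>x. x \<in> A \<Longrightarrow> r (r x) = r x"
    and image: "r ` A = {a, b, c, d}"
    and incomparable: "\<not> le a b" "\<not> le b a" "\<not> le c d" "\<not> le d c"
    and bottoms_below_tops: "lt le a c" "lt le a d" "lt le b c" "lt le b d"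
begin

lemma crown_in_carrier: "a \<in> A" "b \<in> A" "c \<in> A" "d \<in> A"
proof -
  have "r ` A \<subseteq> A" using maps_to by (rule image_subsetI)
  then show "a \<in> A" "b \<in> A" "c \<in> A" "d \<in> A" unfolding image by simp_all
qed

lemma retract_in_crown: "x \<in> A \<Longrightarrow> r x \<in> {a, b, c, d}"
  using image by blast

lemma retract_fixes_crown:
  assumes "y \<in> {a, b, c, d}"
  shows "r y = y"
proof -
  obtain x where "x \<in> A" "y = r x" using assms image by (metis imageE)
  then show ?thesis using idem by simp
qed

lemma tops_not_below_bottoms: "\<not> le c a" "\<not> le d a" "\<not> le c b" "\<not> le d b"
  using finite_poset_less_not_le[OF poset] crown_in_carrier bottoms_below_tops by blast+

lemma crown_below_bottom: "y \<in> {a, b} \<Longrightarrow> z \<in> {a, b, c, d} \<Longrightarrow> le z y \<Longrightarrow> z = y"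
  using incomparable tops_not_below_bottoms by auto

lemma crown_above_top: "y \<in> {c, d} \<Longrightarrow> z \<in> {a, b, c, d} \<Longrightarrow> le y z \<Longrightarrow> z = y"
  using incomparable tops_not_below_bottoms by auto

lemma retract_below_bottom:
  assumes "x \<in> A" "y \<in> A" "le x y" "r y \<in> {a, b}"
  shows "r x = r y"
  using crown_below_bottom[OF assms(4) retract_in_crown[OF assms(1)]] mono assms(1-3) .

lemma retract_above_top:
  assumes "x \<in> A" "y \<in> A" "le x y" "r x \<in> {c, d}"
  shows "r y = r x"
  using crown_above_top[OF assms(4) retract_in_crown[OF assms(2)]] mono assms(1-3) .

lemma retract_above_bottoms:
  assumes "x \<in> A" "u \<in> A" "v \<in> A" "le u x" "le v x" "r u = a" "r v = b"
  shows "r x \<in> {c, d}"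
proof -
  have "le a (r x)" "le b (r x)" using mono[of u x] mono[of v x] assms by simp_all
  then show ?thesis using retract_in_crown[OF assms(1)] incomparable by auto
qed

end

lemma has_4crown_retract_crown_retract:
  assumes "finite_poset A le" and "has_4crown_retract A le"
  obtains r a b c d where "crown_retract A le r a b c d"
proof -
  from assms(2) obtain r a b c d where
    "\<forall>x\<in>A. r x \<in> A" "\<forall>x\<in>A. \<forall>y\<in>A. le x y \<longrightarrow> le (r x) (r y)" "\<forall>x\<in>A. r (r x) = r x"
    "r ` A = {a, b, c, d}" "\<not> le a b" "\<not> le b a" "\<not> le c d" "\<not> le d c"
    "lt le a c" "lt le a d" "lt le b c" "lt le b d"
    unfolding has_4crown_retract_def by blast
  with assms(1) have "crown_retract A le r a b c d"
    by unfold_locales simp_all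
  then show thesis by (rule that)
qed

lemma (in section3_grid) no_crown_retract:
  assumes "h = Suc k"
    and bottom_below: "\<And>p q. p < 3 \<Longrightarrow> q < 3 \<Longrightarrow> le (c 0 p) (c k q)"
    and rotation: "j \<in> {1, 2}" "\<And>i. i < 3 \<Longrightarrow> lt le (c k i) (c h ((i + j) mod 3))"
  shows "\<not> crown_retract A le r a b s t"
proof
  assume "crown_retract A le r a b s t"
  then interpret crown: crown_retract A le r a b s t .
  have bottom_column: "\<exists>p<3. r (c 0 p) = y" if "y \<in> {a, b}" for y
  proof -
    have "y \<in> A" using crown.crown_in_carrier that by auto
    then obtain l p where lp: "c l p = y" "l \<le> h" "p < 3"
      using carrier_cell by metis
    then have "le (c 0 p) y" using column_le[of 0 l p] by simp
    moreover have "r y = y" using crown.retract_fixes_crown that by auto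
    ultimately have "r (c 0 p) = y"
      using crown.retract_below_bottom[of "c 0 p" y] cell_in_carrier \<open>y \<in> A\<close> lp that by simp
    with lp show ?thesis by blast
  qed
  have top_column: "\<exists>p<3. r (c h p) = y" if "y \<in> {s, t}" for y
  proof -
    have "y \<in> A" using crown.crown_in_carrier that by auto
    then obtain l p where lp: "c l p = y" "l \<le> h" "p < 3"
      using carrier_cell by metis
    then have "le y (c h p)" using column_le[of l h p] by simp
    moreover have "r y = y" using crown.retract_fixes_crown that by auto
    ultimately have "r (c h p) = y"
      using crown.retract_above_top[of y "c h p"] cell_in_carrier \<open>y \<in> A\<close> lp that by simp
    with lp show ?thesis by blast
  qed
  obtain pa pb where "r (c 0 pa) = a" "r (c 0 pb) = b" "pa < 3" "pb < 3"
    using bottom_column by blast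
  then have penultimate_top: "r (c k q) \<in> {s, t}" if "q < 3" for q
    using crown.retract_above_bottoms[of "c k q" "c 0 pa" "c 0 pb"] bottom_below
      cell_in_carrier \<open>h = Suc k\<close> that by simp
  have top_row: "r (c h i) = r (c k i)" "r (c h ((i + j) mod 3)) = r (c k i)" if "i < 3" for i
  proof -
    have "le (c k i) (c h i)" "le (c k i) (c h ((i + j) mod 3))"
      using column_le[of k h i] rotation(2)[OF that] \<open>h = Suc k\<close> that unfolding lt_def by simp_all
    moreover have "c k i \<in> A" "c h i \<in> A" "c h ((i + j) mod 3) \<in> A"
      using cell_in_carrier \<open>h = Suc k\<close> that by simp_all
    ultimately show "r (c h i) = r (c k i)" "r (c h ((i + j) mod 3)) = r (c k i)"
      using crown.retract_above_top[OF \<open>c k i \<in> A\<close> _ _ penultimate_top[OF that]] by blast+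
  qed
  obtain ps pt where "r (c h ps) = s" "r (c h pt) = t" "ps < 3" "pt < 3"
    using top_column by blast
  have "r (c h i) = r (c h ((i + j) mod 3))" if "i < 3" for i
    using top_row[OF that] by simp
  then have "r (c h ps) = r (c h pt)"
    using rotation_mod3_const[OF rotation(1), of "\<lambda>i. r (c h i)"] \<open>ps < 3\<close> \<open>pt < 3\<close>
    by blast
  with \<open>r (c h ps) = s\<close> \<open>r (c h pt) = t\<close> have "s = t" by simp
  then show False
    using crown.incomparable(3) finite_poset_refl[OF poset crown.crown_in_carrier(3)] by simp
qed

theorem lemma3p7:
  fixes A :: "'a set" and le :: "'a \<Rightarrow> 'a \<Rightarrow> bool" and \<eta> :: nat
  assumes "\<eta> \<ge> 2"
    and "in_N \<eta> A le"
    and "height A le > \<eta>"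
  shows "\<not> has_4crown_retract A le"
proof
  assume crown: "has_4crown_retract A le"
  have poset: "finite_poset A le" and "section3 A le" "nice A le" "horizon A le = \<eta>"
    using assms(2) unfolding in_N_def by auto
  then obtain c where "section3_grid A le (height A le) c"
    using section3_grid_exists by blast
  then interpret section3_grid A le "height A le" c .
  obtain k where k: "height A le = Suc k" "\<eta> \<le> k"
    using assms(3) by (cases "height A le") auto
  have "set_less le (level A le 0) (level A le \<eta>)"
    using horizon_set_less[of 0 A le] \<open>horizon A le = \<eta>\<close> assms(3) by simp
  then have "lt le (c 0 p) (c \<eta> q)" if "p < 3" "q < 3" for p q
    using level_eq[of 0] level_eq[of \<eta>] assms(3) that unfolding set_less_def by auto
  then have bottom_below: "le (c 0 p) (c k q)" if "p < 3" "q < 3" for p q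
    using le_trans_carrier[OF _ column_le[of \<eta> k q]] cell_in_carrier k assms(3) that
    unfolding lt_def by simp
  obtain j where "j \<in> {1, 2}" "\<And>i. i < 3 \<Longrightarrow> lt le (c k i) (c (height A le) ((i + j) mod 3))"
    using nice_top_row_rotation[OF \<open>nice A le\<close> k(1)] by blast
  note no_crown = no_crown_retract[OF k(1) bottom_below this]
  obtain r a b s t where "crown_retract A le r a b s t"
    using has_4crown_retract_crown_retract[OF poset crown] .
  with no_crown show False by blast
qed

end
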